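(* Let $\mathcal{C}$ be a covering of a finite set $E$. If $XH$ induced by $\mathcal{C}$ is the closure operator of a matroid on $E$, then $VH$ induced by $\mathcal{C}$ is also the closure operator of a matroid on $E$; moreover $\mathcal{I}_{XH}(\mathcal{C})=\mathcal{I}_{VH}(\mathcal{C})$ and $\mathcal{L}_{XH}(M(\mathcal{C}))=\mathcal{L}_{VH}(M(\mathcal{C}))$.
   Context: A covering of $E$ is a family of nonempty subsets of $E$ with union $E$. $N(x)=\bigcap\{K\in\mathcal{C}:x\in K\}$; $XH(X)=\{x:N(x)\cap X\neq\emptyset\}$; $VH(X)=\bigcup\{N(x):N(x)\cap X\neq\emptyset\}$. When $H\in\{XH,VH\}$ is the closure operator of a matroid (closure $cl(X)=\{a:r(X\cup\{a\})=r(X)\}$), $\mathcal{I}_H(\mathcal{C})=\{I\subseteq E:x\notin H(I-\{x\})\ \forall x\in I\}$ is its family of independent sets and $\mathcal{L}_H(M(\mathcal{C}))=\{X:H(X)=X\}$ its set of closed sets. *)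

theory Defs
  imports Main
begin

definition covering :: "'a set \<Rightarrow> 'a set set \<Rightarrow> bool" where
  "covering E C \<longleftrightarrow> (\<forall>K\<in>C. K \<subseteq> E \<and> K \<noteq> {}) \<and> \<Union>C = E"

definition nbhd :: "'a set set \<Rightarrow> 'a \<Rightarrow> 'a set" where
  "nbhd C x = \<Inter>{K\<in>C. x \<in> K}"

definition XH :: "'a set \<Rightarrow> 'a set set \<Rightarrow> 'a set \<Rightarrow> 'a set" where
  "XH E C X = {x\<in>E. nbhd C x \<inter> X \<noteq> {}}"

definition VH :: "'a set \<Rightarrow> 'a set set \<Rightarrow> 'a set \<Rightarrow> 'a set" where
  "VH E C X = \<Union>{nbhd C x | x. x \<in> E \<and> nbhd C x \<inter> X \<noteq> {}}"

definition matroid :: "'a set \<Rightarrow> 'a set set \<Rightarrow> bool" where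
  "matroid E \<I> \<longleftrightarrow> finite E \<and> \<I> \<subseteq> Pow E \<and> {} \<in> \<I>
     \<and> (\<forall>I J. J \<in> \<I> \<and> I \<subseteq> J \<longrightarrow> I \<in> \<I>)
     \<and> (\<forall>I J. I \<in> \<I> \<and> J \<in> \<I> \<and> card I < card J \<longrightarrow>
           (\<exists>e\<in>J - I. insert e I \<in> \<I>))"

definition mrank :: "'a set set \<Rightarrow> 'a set \<Rightarrow> nat" where
  "mrank \<I> X = Max {card Y | Y. Y \<subseteq> X \<and> Y \<in> \<I>}"

definition mclosure :: "'a set \<Rightarrow> 'a set set \<Rightarrow> 'a set \<Rightarrow> 'a set" where
  "mclosure E \<I> X = {a\<in>E. mrank \<I> (X \<union> {a}) = mrank \<I> X}"

definition is_matroid_closure :: "'a set \<Rightarrow> ('a set \<Rightarrow> 'a set) \<Rightarrow> bool" where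
  "is_matroid_closure E H \<longleftrightarrow>
     (\<exists>\<I>. matroid E \<I> \<and> (\<forall>X. X \<subseteq> E \<longrightarrow> H X = mclosure E \<I> X))"

definition indep_H :: "'a set \<Rightarrow> ('a set \<Rightarrow> 'a set) \<Rightarrow> 'a set set" where
  "indep_H E H = {I. I \<subseteq> E \<and> (\<forall>x\<in>I. x \<notin> H (I - {x}))}"

definition closed_H :: "'a set \<Rightarrow> ('a set \<Rightarrow> 'a set) \<Rightarrow> 'a set set" where
  "closed_H E H = {X. X \<subseteq> E \<and> H X = X}"

end

theory Submission
  imports Defs
begin

text \<open>
  Since XH maps the empty set to itself, every point has rank one in the matroid, and the
  rank condition for x \<in> cl {y} is then symmetric in x and y. Via x \<in> XH {y} \<longleftrightarrow> y \<in> N(x)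
  this makes membership in neighbourhoods symmetric, so the neighbourhoods are the blocks
  of a partition of E. For such a covering each N(x) meeting X is contained in XH X, hence
  VH = XH and all three claims coincide.
\<close>

lemma mrank_empty: "{} \<in> \<I> \<Longrightarrow> mrank \<I> {} = 0"
proof -
  assume "{} \<in> \<I>"
  then have "{card Y | Y. Y \<subseteq> {} \<and> Y \<in> \<I>} = {0}" by auto
  then show ?thesis unfolding mrank_def by simp
qed

lemma mrank_singleton_le_one: "{} \<in> \<I> \<Longrightarrow> mrank \<I> {z} \<le> 1"
proof -
  assume "{} \<in> \<I>"
  let ?S = "{card Y | Y. Y \<subseteq> {z} \<and> Y \<in> \<I>}"
  have "finite ?S"
    by (rule finite_subset[of _ "card ` Pow {z}"]) auto
  moreover have "?S \<noteq> {}" using \<open>{} \<in> \<I>\<close> by blast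
  moreover have "n \<le> 1" if "n \<in> ?S" for n
    using that by (auto simp: subset_singleton_iff)
  ultimately show ?thesis unfolding mrank_def by (rule Max.boundedI)
qed

lemma mrank_singleton_eq_one:
  assumes "{} \<in> \<I>" "z \<in> E" "z \<notin> mclosure E \<I> {}"
  shows "mrank \<I> {z} = 1"
proof -
  have "mrank \<I> {z} \<noteq> 0"
    using assms(2,3) mrank_empty[OF assms(1)] unfolding mclosure_def by simp
  then show ?thesis using mrank_singleton_le_one[OF assms(1), of z] by linarith
qed

lemma mclosure_singleton_sym:
  assumes "{} \<in> \<I>" "x \<in> E" "y \<in> E"
    and "x \<notin> mclosure E \<I> {}" "y \<notin> mclosure E \<I> {}"
    and "x \<in> mclosure E \<I> {y}"
  shows "y \<in> mclosure E \<I> {x}"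
proof -
  have "mrank \<I> {x, y} = mrank \<I> {y}"
    using assms(6) unfolding mclosure_def by (simp add: insert_commute)
  also have "\<dots> = mrank \<I> {x}"
    using mrank_singleton_eq_one[OF assms(1)] assms(2-5) by simp
  finally show ?thesis using assms(3) unfolding mclosure_def by (simp add: insert_commute)
qed

lemma XH_empty: "XH E C {} = {}"
  unfolding XH_def by auto

lemma XH_singleton_iff: "x \<in> XH E C {y} \<longleftrightarrow> x \<in> E \<and> y \<in> nbhd C x"
  unfolding XH_def by auto

lemma nbhd_self: "covering E C \<Longrightarrow> x \<in> E \<Longrightarrow> x \<in> nbhd C x"
  unfolding covering_def nbhd_def by auto

lemma nbhd_subset: "covering E C \<Longrightarrow> x \<in> E \<Longrightarrow> nbhd C x \<subseteq> E"
  unfolding covering_def nbhd_def by auto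

lemma nbhd_mono: "y \<in> nbhd C x \<Longrightarrow> nbhd C y \<subseteq> nbhd C x"
  unfolding nbhd_def by blast

lemma nbhd_eq_if_sym:
  assumes "covering E C" "x \<in> E" "y \<in> nbhd C x"
    and sym: "\<And>x y. x \<in> E \<Longrightarrow> y \<in> nbhd C x \<Longrightarrow> x \<in> nbhd C y"
  shows "nbhd C y = nbhd C x"
  using nbhd_mono[OF assms(3)] nbhd_mono[OF sym[OF assms(2,3)]] by (rule equalityI)

lemma VH_eq_XH_if_nbhd_sym:
  assumes cov: "covering E C"
    and sym: "\<And>x y. x \<in> E \<Longrightarrow> y \<in> nbhd C x \<Longrightarrow> x \<in> nbhd C y"
  shows "VH E C = XH E C"
proof (intro ext equalityI subsetI)
  fix X y
  assume "y \<in> VH E C X"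
  then obtain x where x: "x \<in> E" "nbhd C x \<inter> X \<noteq> {}" "y \<in> nbhd C x"
    unfolding VH_def by blast
  then show "y \<in> XH E C X"
    using nbhd_subset[OF cov] nbhd_eq_if_sym[OF cov _ _ sym]
    unfolding XH_def by blast
next
  fix X y
  assume "y \<in> XH E C X"
  then show "y \<in> VH E C X"
    using nbhd_self[OF cov] unfolding XH_def VH_def by blast
qed

theorem proposition28:
  fixes E :: "'a set" and C :: "'a set set"
  assumes "finite E" and "covering E C"
    and "is_matroid_closure E (XH E C)"
  shows "is_matroid_closure E (VH E C)
    \<and> indep_H E (XH E C) = indep_H E (VH E C)
    \<and> closed_H E (XH E C) = closed_H E (VH E C)"
proof -
  obtain \<I> where "matroid E \<I>" and cl: "\<And>X. X \<subseteq> E \<Longrightarrow> XH E C X = mclosure E \<I> X"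
    using assms(3) unfolding is_matroid_closure_def by blast
  then have empty_indep: "{} \<in> \<I>" unfolding matroid_def by blast
  have loopless: "z \<notin> mclosure E \<I> {}" for z
    using cl[of "{}"] by (simp add: XH_empty)
  have "x \<in> nbhd C y" if x: "x \<in> E" and yx: "y \<in> nbhd C x" for x y
  proof -
    have y: "y \<in> E" using nbhd_subset[OF assms(2) x] yx by blast
    have "x \<in> XH E C {y}" using x yx by (simp add: XH_singleton_iff)
    then have "x \<in> mclosure E \<I> {y}" using cl[of "{y}"] y by simp
    then have "y \<in> mclosure E \<I> {x}"
      by (rule mclosure_singleton_sym[OF empty_indep x y loopless loopless])
    then have "y \<in> XH E C {x}" using cl[of "{x}"] x by simp
    then show ?thesis by (simp add: XH_singleton_iff)
  qed
  then have "VH E C = XH E C" by (rule VH_eq_XH_if_nbhd_sym[OF assms(2)])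
  then show ?thesis using assms(3) by simp
qed

end
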